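(* For any $n,N\in\mathbb{N}$ and $a\in\mathbb{T}$, with $H_N=\sum_{k=1}^N1/k$, $$\frac{1}{2N+1}\sum_{w\in\mathbb{T}_N}\Big|\mathsf{Dir}_n\Big(\frac wa\Big)\Big|\le\frac{4n+2}{2N+1}+H_N,$$ $$\frac{1}{2N+1}\sum_{w\in\mathbb{T}_N}\Big|\mathsf{Fej}^+_{2n}\Big(\frac wa\Big)\Big|=\frac{1}{2N+1}\sum_{w\in\mathbb{T}_N}\Big|\mathsf{Fej}_n\Big(\frac wa\Big)\Big|\le\frac{2n+2}{2N+1}+\Big(\frac{2N+1}{2n+2}\Big)\frac{\pi^2}{6}.$$
   Context: $\mathbb{T}$ is the unit circle; $\mathbb{T}_N=\{\exp(i2\pi k/(2N+1)):k=-N,\dots,N\}$. Dirichlet kernel $\mathsf{Dir}_n(z)=\sum_{|k|\le n}z^k$; Fejér kernel $\mathsf{Fej}_n(z)=\sum_{|k|\le n}\big(1-\frac{|k|}{n+1}\big)z^k$; causal Fejér kernel $\mathsf{Fej}^+_{2n}(z)=z^n\mathsf{Fej}_n(z)$. *)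

theory Defs
  imports "HOL-Analysis.Analysis"
begin

definition circle :: "complex set" where
  "circle = {z. norm z = 1}"

definition circle_grid :: "nat \<Rightarrow> complex set" where
  "circle_grid N = (\<lambda>k::int. exp (\<i> * 2 * pi * of_int k / of_nat (2*N+1))) ` {-int N..int N}"

definition Dir :: "nat \<Rightarrow> complex \<Rightarrow> complex" where
  "Dir n z = (\<Sum>k\<in>{-int n..int n}. z powi k)"

definition Fej :: "nat \<Rightarrow> complex \<Rightarrow> complex" where
  "Fej n z = (\<Sum>k\<in>{-int n..int n}. complex_of_real (1 - real_of_int \<bar>k\<bar> / real (n+1)) * z powi k)"

definition Fej_plus :: "nat \<Rightarrow> complex \<Rightarrow> complex" where
  "Fej_plus n z = z ^ n * Fej n z"
  \<comment> \<open>Fej_plus n is the paper's causal Fejer kernel of index 2n.\<close>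

end

(*
  On the unit circle, (z - 1) Dir n z = z^(n+1) - z^(-n) and, since Fej n is the mean of
  Dir 0, ..., Dir n, (n + 1) (z - 1)^2 Fej n z = z^(n+2) - 2z + z^(-n).  Hence |Dir n z| is at
  most 2n + 1 and at most 2 / |z - 1|, and |Fej n z| is at most n + 1 and at most
  4 / ((n + 1) |z - 1|^2).  Dividing a by a suitable (2N+1)-th root of unity, the points w / a
  become exp (2 pi i (k - u) / (2N+1)) with k = -N..N and |u| <= 1/2, and Jordan's inequality
  gives |exp (2 pi i x / (2N+1)) - 1| >= 4 |x| / (2N+1).  The two points closest to 1 are
  estimated by the uniform bound, the j-th next ones on either side by the decay bound at
  distance j, which yields the harmonic number resp. the partial sums of 1/j^2 <= pi^2/6.
  Fej_plus n differs from Fej n by a unimodular factor.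
*)
theory Submission
  imports Defs
begin

lemma sum_symmetric_interval_Suc:
  "(\<Sum>k\<in>{-int (Suc n)..int (Suc n)}. f k) = (\<Sum>k\<in>{-int n..int n}. f k) + f (int (Suc n)) + f (- int (Suc n))"
proof -
  have "{-int (Suc n)..int (Suc n)} = insert (int (Suc n)) (insert (- int (Suc n)) {-int n..int n})"
    by auto
  then show ?thesis by (simp add: algebra_simps)
qed

lemma Dir_0 [simp]: "Dir 0 z = 1"
  by (simp add: Dir_def)

lemma Dir_Suc: "Dir (Suc n) z = Dir n z + z ^ Suc n + inverse (z ^ Suc n)"
  unfolding Dir_def sum_symmetric_interval_Suc by (simp only: power_int_minus power_int_of_nat)

lemma Dir_times_z_minus_1:
  assumes "z \<noteq> 0"
  shows "(z - 1) * Dir n z = z ^ Suc n - inverse (z ^ n)"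
proof (induction n)
  case (Suc n)
  have "(z - 1) * Dir (Suc n) z = (z - 1) * Dir n z + (z - 1) * (z ^ Suc n + inverse (z ^ Suc n))"
    by (simp add: Dir_Suc algebra_simps)
  also have "\<dots> = z ^ Suc n - inverse (z ^ n) + (z - 1) * (z ^ Suc n + inverse (z ^ Suc n))"
    by (simp only: Suc.IH)
  also have "\<dots> = z ^ Suc (Suc n) - inverse (z ^ Suc n)"
    using assms by (simp add: field_simps)
  finally show ?case .
qed simp

lemma sum_Dir_eq_triangle_coeffs:
  "(\<Sum>j\<le>n. Dir j z) = (\<Sum>k\<in>{-int n..int n}. of_int (int n + 1 - \<bar>k\<bar>) * z powi k)"
proof (induction n)
  case (Suc n)
  have "(\<Sum>k\<in>{-int (Suc n)..int (Suc n)}. of_int (int (Suc n) + 1 - \<bar>k\<bar>) * z powi k)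
        = (\<Sum>k\<in>{-int n..int n}. of_int (int n + 1 - \<bar>k\<bar>) * z powi k + z powi k)
          + z ^ Suc n + inverse (z ^ Suc n)"
    unfolding sum_symmetric_interval_Suc
    by (simp only: power_int_minus power_int_of_nat) (simp add: algebra_simps)
  also have "\<dots> = (\<Sum>j\<le>Suc n. Dir j z)"
    by (simp add: Suc.IH sum.distrib Dir_Suc flip: Dir_def)
  finally show ?case ..
qed simp

lemma Fej_eq_mean_Dir: "Fej n z = (\<Sum>j\<le>n. Dir j z) / of_nat (n + 1)"
  unfolding Fej_def sum_Dir_eq_triangle_coeffs sum_divide_distrib
proof (rule sum.cong [OF refl])
  fix k
  have "complex_of_real (1 - real_of_int \<bar>k\<bar> / real (n + 1)) = of_int (int n + 1 - \<bar>k\<bar>) / of_nat (n + 1)"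
    by (simp add: field_simps of_real_of_int_eq flip: of_int_abs)
  then show "complex_of_real (1 - real_of_int \<bar>k\<bar> / real (n + 1)) * z powi k
             = of_int (int n + 1 - \<bar>k\<bar>) * z powi k / of_nat (n + 1)"
    by simp
qed

lemma sum_Dir_times_square_z_minus_1:
  assumes "z \<noteq> 0"
  shows "(z - 1)^2 * (\<Sum>j\<le>n. Dir j z) = z ^ (n + 2) - 2 * z + inverse (z ^ n)"
proof (induction n)
  case (Suc n)
  have "(z - 1)^2 * (\<Sum>j\<le>Suc n. Dir j z)
        = (z - 1)^2 * (\<Sum>j\<le>n. Dir j z) + (z - 1) * ((z - 1) * Dir (Suc n) z)"
    by (simp add: power2_eq_square algebra_simps)
  also have "\<dots> = z ^ (n + 2) - 2 * z + inverse (z ^ n) + (z - 1) * (z ^ Suc (Suc n) - inverse (z ^ Suc n))"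
    by (simp only: Suc.IH Dir_times_z_minus_1 [OF assms])
  also have "\<dots> = z ^ (Suc n + 2) - 2 * z + inverse (z ^ Suc n)"
    using assms by (simp add: field_simps)
  finally show ?case .
qed (simp add: power2_eq_square algebra_simps)

lemma norm_Dir_le:
  assumes "norm z = 1"
  shows "norm (Dir n z) \<le> 2 * real n + 1"
proof -
  have "norm (Dir n z) \<le> (\<Sum>k\<in>{-int n..int n}. norm (z powi k))"
    unfolding Dir_def by (rule norm_sum)
  also have "\<dots> = 2 * real n + 1"
    using assms by (simp add: norm_power_int)
  finally show ?thesis .
qed

lemma norm_Dir_times_z_minus_1_le:
  assumes "norm z = 1"
  shows "norm (z - 1) * norm (Dir n z) \<le> 2"
proof -
  have "z \<noteq> 0"
    using assms by auto
  have "norm (z - 1) * norm (Dir n z) = norm (z ^ Suc n - inverse (z ^ n))"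
    by (simp only: Dir_times_z_minus_1 [OF \<open>z \<noteq> 0\<close>] flip: norm_mult)
  also have "\<dots> \<le> norm (z ^ Suc n) + norm (inverse (z ^ n))"
    by (rule norm_triangle_ineq4)
  also have "\<dots> = 2"
    using assms by (simp add: norm_mult norm_power norm_inverse)
  finally show ?thesis .
qed

lemma norm_Fej_le:
  assumes "norm z = 1"
  shows "norm (Fej n z) \<le> real n + 1"
proof -
  have "norm (\<Sum>j\<le>n. Dir j z) \<le> (\<Sum>j\<le>n. 2 * real j + 1)"
    by (intro order_trans [OF norm_sum] sum_mono) (rule norm_Dir_le [OF assms])
  also have "\<dots> = (real n + 1)^2"
    by (induction n) (simp_all add: power2_eq_square algebra_simps)
  finally have "norm (\<Sum>j\<le>n. Dir j z) / (real n + 1) \<le> (real n + 1)^2 / (real n + 1)"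
    by (rule divide_right_mono) simp
  then show ?thesis
    unfolding Fej_eq_mean_Dir norm_divide norm_of_nat by (simp add: power2_eq_square add.commute)
qed

lemma norm_Fej_times_square_z_minus_1_le:
  assumes "norm z = 1"
  shows "norm (z - 1)^2 * norm (Fej n z) \<le> 4 / (real n + 1)"
proof -
  have "z \<noteq> 0"
    using assms by auto
  have "norm (z - 1)^2 * norm (\<Sum>j\<le>n. Dir j z) = norm (z ^ (n + 2) - 2 * z + inverse (z ^ n))"
    by (simp only: sum_Dir_times_square_z_minus_1 [OF \<open>z \<noteq> 0\<close>] flip: norm_mult norm_power)
  also have "\<dots> \<le> norm (z ^ (n + 2)) + norm (2 * z) + norm (inverse (z ^ n))"
    by (meson norm_triangle_ineq norm_triangle_ineq4 add_mono order_trans order_refl)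
  also have "\<dots> = 4"
    using assms by (simp add: norm_power norm_inverse norm_mult)
  finally have "norm (z - 1)^2 * norm (\<Sum>j\<le>n. Dir j z) / (real n + 1) \<le> 4 / (real n + 1)"
    by (rule divide_right_mono) simp
  then show ?thesis
    unfolding Fej_eq_mean_Dir norm_divide norm_of_nat by (simp add: add.commute)
qed

lemma Jordan_inequality:
  fixes x :: real
  assumes "0 \<le> x" "x \<le> pi / 2"
  shows "2 / pi * x \<le> sin x"
proof -
  have "convex_on {0..pi/2} (\<lambda>x. - sin x)"
  proof (rule convex_on_realI [where f' = "\<lambda>x. - cos x"])
    show "((\<lambda>x. - sin x) has_real_derivative - cos x) (at x)" for x
      by (auto intro!: derivative_eq_intros)
    show "- cos x \<le> - cos y" if "x \<in> {0..pi/2}" "y \<in> {0..pi/2}" "x \<le> y" for x y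
      using cos_monotone_0_pi_le [of x y] that by auto
  qed simp
  moreover define t where "t = 2 / pi * x"
  moreover have "0 \<le> t" "t \<le> 1"
    using assms pi_gt_zero unfolding t_def by (auto simp: field_simps)
  ultimately have "- sin ((1 - t) *\<^sub>R 0 + t *\<^sub>R (pi/2)) \<le> (1 - t) * (- sin 0) + t * (- sin (pi/2))"
    by (intro convex_onD) auto
  moreover have "t *\<^sub>R (pi/2) = x"
    unfolding t_def by simp
  ultimately show ?thesis
    unfolding t_def by simp
qed

definition grid_exp :: "nat \<Rightarrow> real \<Rightarrow> complex" where
  "grid_exp N x = exp (\<i> * 2 * pi * x / of_nat (2 * N + 1))"

lemma norm_grid_exp [simp]: "norm (grid_exp N x) = 1"
  unfolding grid_exp_def by (simp add: norm_exp_eq_Re)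

lemma grid_exp_add: "grid_exp N (x + y) = grid_exp N x * grid_exp N y"
  unfolding grid_exp_def by (simp add: exp_add [symmetric] algebra_simps add_divide_distrib)

lemma grid_exp_diff: "grid_exp N (x - y) = grid_exp N x / grid_exp N y"
  unfolding grid_exp_def by (simp add: exp_diff [symmetric] algebra_simps diff_divide_distrib)

lemma grid_exp_power: "grid_exp N x ^ (2 * N + 1) = exp (2 * pi * \<i> * x)"
proof -
  have "grid_exp N x ^ (2 * N + 1) = exp (of_nat (2 * N + 1) * (\<i> * 2 * pi * x / of_nat (2 * N + 1)))"
    unfolding grid_exp_def exp_of_nat_mult ..
  also have "\<dots> = exp (2 * pi * \<i> * x)"
    by (simp add: field_simps del: of_nat_Suc)
  finally show ?thesis .
qed

lemma grid_exp_of_int_power: "grid_exp N (of_int k) ^ (2 * N + 1) = 1"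
  unfolding grid_exp_power using exp_integer_2pi [of "of_int k"] by (simp add: mult_ac)

lemma norm_grid_exp_minus_1_ge:
  assumes "\<bar>x\<bar> \<le> real N + 1/2"
  shows "4 * \<bar>x\<bar> / real (2 * N + 1) \<le> norm (grid_exp N x - 1)"
proof -
  define y where "y = pi * x / real (2 * N + 1)"
  have "\<bar>y\<bar> = pi * \<bar>x\<bar> / real (2 * N + 1)"
    unfolding y_def by (simp add: abs_mult)
  also have "\<dots> \<le> pi * (real N + 1/2) / real (2 * N + 1)"
    using assms by (intro divide_right_mono mult_left_mono) auto
  also have "\<dots> = pi / 2"
    by (simp add: field_simps)
  finally have "2 / pi * \<bar>y\<bar> \<le> \<bar>sin y\<bar>"
    using Jordan_inequality [of "\<bar>y\<bar>"] by (cases "y \<ge> 0") auto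
  have "grid_exp N x = exp (\<i> * of_real (2 * y))"
    unfolding grid_exp_def y_def by (simp add: field_simps)
  then have "norm (grid_exp N x - 1) = 2 * \<bar>sin y\<bar>"
    using dist_exp_i_1 [of "2 * y"] by simp
  moreover have "4 * \<bar>x\<bar> / real (2 * N + 1) = 2 * (2 / pi * \<bar>y\<bar>)"
    unfolding \<open>\<bar>y\<bar> = _\<close> by (simp add: field_simps)
  ultimately show ?thesis
    using \<open>2 / pi * \<bar>y\<bar> \<le> \<bar>sin y\<bar>\<close> by linarith
qed

lemma circle_grid_eq_image_grid_exp:
  "circle_grid N = (\<lambda>k. grid_exp N (of_int k)) ` {-int N..int N}"
  unfolding circle_grid_def grid_exp_def by simp

lemma circle_grid_eq_roots_of_unity: "circle_grid N = {z. z ^ (2 * N + 1) = 1}"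
proof
  show "circle_grid N \<subseteq> {z. z ^ (2 * N + 1) = 1}"
    unfolding circle_grid_eq_image_grid_exp using grid_exp_of_int_power by blast
next
  show "{z. z ^ (2 * N + 1) = 1} \<subseteq> circle_grid N"
  proof
    fix z :: complex
    assume "z \<in> {z. z ^ (2 * N + 1) = 1}"
    then obtain j where j: "j < 2 * N + 1"
      and "z = exp (2 * of_real pi * \<i> * of_nat j / of_nat (2 * N + 1))"
      unfolding complex_roots_unity [of "2 * N + 1", OF le_add2] by blast
    then have z: "z = grid_exp N (real j)"
      unfolding grid_exp_def by (simp add: mult_ac)
    show "z \<in> circle_grid N"
    proof (cases "j \<le> N")
      case True
      then show ?thesis
        unfolding circle_grid_eq_image_grid_exp z by (intro image_eqI [of _ _ "int j"]) auto
    next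
      case False
      have "grid_exp N (of_int (int j - int (2 * N + 1))) = z / grid_exp N (of_int (int (2 * N + 1)))"
        unfolding z by (simp add: grid_exp_diff)
      also have "grid_exp N (of_int (int (2 * N + 1))) = 1"
        unfolding grid_exp_def using exp_two_pi_i by (simp add: mult_ac del: of_nat_Suc)
      finally show ?thesis
        unfolding circle_grid_eq_image_grid_exp using False j
        by (intro image_eqI [of _ _ "int j - int (2 * N + 1)"]) auto
    qed
  qed
qed

lemma sum_circle_grid:
  "(\<Sum>w\<in>circle_grid N. f w) = (\<Sum>k\<in>{-int N..int N}. f (grid_exp N (of_int k)))"
proof -
  have "card ((\<lambda>k. grid_exp N (of_int k)) ` {-int N..int N}) = card {-int N..int N}"
    using card_complex_roots_unity [of "2 * N + 1"]
    by (simp flip: circle_grid_eq_image_grid_exp add: circle_grid_eq_roots_of_unity)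
  then have "inj_on (\<lambda>k. grid_exp N (of_int k)) {-int N..int N}"
    by (rule eq_card_imp_inj_on [OF finite_atLeastAtMost_int])
  then show ?thesis
    unfolding circle_grid_eq_image_grid_exp by (simp add: sum.reindex)
qed

lemma sum_circle_grid_rotated:
  assumes "norm a = 1"
  obtains u where "\<bar>u\<bar> \<le> 1/2"
    and "(\<Sum>w\<in>circle_grid N. f (w / a)) = (\<Sum>k\<in>{-int N..int N}. f (grid_exp N (of_int k - u)))"
proof -
  define t where "t = Arg a * real (2 * N + 1) / (2 * pi)"
  define u where "u = t - of_int (round t)"
  define \<zeta> where "\<zeta> = grid_exp N (of_int (round t))"
  have "Arg a = 2 * pi * t / real (2 * N + 1)"
    unfolding t_def by (simp del: of_nat_Suc)
  have "a \<noteq> 0"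
    using assms by auto
  then have "a = exp (\<i> * Arg a)"
    using Arg_eq [of a] assms by simp
  also have "\<dots> = grid_exp N t"
    unfolding grid_exp_def \<open>Arg a = _\<close> by (simp add: mult_ac)
  also have "\<dots> = \<zeta> * grid_exp N u"
    unfolding \<zeta>_def u_def by (simp flip: grid_exp_add)
  finally have a: "a = \<zeta> * grid_exp N u" .
  have \<zeta>: "\<zeta> ^ (2 * N + 1) = 1" "\<zeta> \<noteq> 0"
    unfolding \<zeta>_def by (simp_all only: grid_exp_of_int_power) (simp add: grid_exp_def)
  have "(\<Sum>w\<in>circle_grid N. f (w / a)) = (\<Sum>w\<in>circle_grid N. f (w / \<zeta> / grid_exp N u))"
    unfolding a by simp
  also have "\<dots> = (\<Sum>v\<in>circle_grid N. f (v / grid_exp N u))"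
    by (rule sum.reindex_bij_witness [of _ "\<lambda>v. v * \<zeta>" "\<lambda>w. w / \<zeta>"])
      (use \<zeta> in \<open>auto simp: circle_grid_eq_roots_of_unity power_divide power_mult_distrib simp del: power_Suc\<close>)
  also have "\<dots> = (\<Sum>k\<in>{-int N..int N}. f (grid_exp N (of_int k - u)))"
    by (simp add: sum_circle_grid grid_exp_diff)
  finally have "(\<Sum>w\<in>circle_grid N. f (w / a)) = (\<Sum>k\<in>{-int N..int N}. f (grid_exp N (of_int k - u)))" .
  moreover have "\<bar>u\<bar> \<le> 1/2"
    using of_int_round_abs_le [of t] unfolding u_def by linarith
  ultimately show ?thesis
    using that by simp
qed

text \<open>For 0 \<le> u \<le> 1/2 the points k - u with k \<le> -1 lie at distance at least -k from 0
  and those with k \<ge> 2 at distance at least k - 1; only k = 0, 1 need the uniform bound.\<close>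

lemma sum_shifted_integers_le_of_nonneg_shift:
  fixes psi :: "real \<Rightarrow> real"
  assumes "0 \<le> C" "0 \<le> D" "0 \<le> u" "u \<le> 1/2"
    and "\<And>x. \<bar>x\<bar> \<le> real N + 1/2 \<Longrightarrow> psi x \<le> C"
    and "\<And>x. 0 < \<bar>x\<bar> \<Longrightarrow> \<bar>x\<bar> \<le> real N + 1/2 \<Longrightarrow> psi x \<le> D / \<bar>x\<bar> ^ p"
  shows "(\<Sum>k\<in>{-int N..int N}. psi (of_int k - u))
           \<le> 2 * C + (\<Sum>j=1..N. D / real j ^ p) + (\<Sum>j=1..<N. D / real j ^ p)"
  using assms(5,6)
proof (induction N)
  case 0
  then have "psi (- u) \<le> C"
    using assms(3,4) by simp
  then show ?case
    using assms(1) by simp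
next
  case (Suc N)
  note near = Suc.prems(1) and far = Suc.prems(2)
  have decay: "psi x \<le> D / real j ^ p" if "0 < j" "real j \<le> \<bar>x\<bar>" "\<bar>x\<bar> \<le> real (Suc N) + 1/2" for x j
  proof -
    have "psi x \<le> D / \<bar>x\<bar> ^ p"
      using far that by simp
    also have "\<dots> \<le> D / real j ^ p"
      using that assms(2) by (intro frac_le power_mono) auto
    finally show ?thesis .
  qed
  have left: "psi (of_int (- int (Suc N)) - u) \<le> D / real (Suc N) ^ p"
    by (rule decay) (use assms(3,4) in auto)
  show ?case
  proof (cases "N = 0")
    case True
    have "psi (- u) \<le> C" "psi (1 - u) \<le> C"
      using near assms(3,4) by auto
    then show ?thesis
      unfolding sum_symmetric_interval_Suc using left True by simp
  next
    case False
    have "(\<Sum>k\<in>{-int N..int N}. psi (of_int k - u))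
            \<le> 2 * C + (\<Sum>j=1..N. D / real j ^ p) + (\<Sum>j=1..<N. D / real j ^ p)"
      by (rule Suc.IH) (use near far in auto)
    moreover have "psi (of_int (int (Suc N)) - u) \<le> D / real N ^ p"
      by (rule decay) (use assms(3,4) False in auto)
    moreover have "(\<Sum>j=1..<Suc N. D / real j ^ p) = (\<Sum>j=1..<N. D / real j ^ p) + D / real N ^ p"
      using False by simp
    ultimately show ?thesis
      unfolding sum_symmetric_interval_Suc using left by simp
  qed
qed

lemma sum_shifted_integers_le:
  fixes psi :: "real \<Rightarrow> real"
  assumes "0 \<le> C" "0 \<le> D" "\<bar>u\<bar> \<le> 1/2"
    and near: "\<And>x. \<bar>x\<bar> \<le> real N + 1/2 \<Longrightarrow> psi x \<le> C"
    and far: "\<And>x. 0 < \<bar>x\<bar> \<Longrightarrow> \<bar>x\<bar> \<le> real N + 1/2 \<Longrightarrow> psi x \<le> D / \<bar>x\<bar> ^ p"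
  shows "(\<Sum>k\<in>{-int N..int N}. psi (of_int k - u))
           \<le> 2 * C + (\<Sum>j=1..N. D / real j ^ p) + (\<Sum>j=1..<N. D / real j ^ p)"
proof (cases "0 \<le> u")
  case True
  then show ?thesis
    using sum_shifted_integers_le_of_nonneg_shift [OF assms(1,2) _ _ near far] assms(3) by simp
next
  case False
  have "(\<Sum>k\<in>{-int N..int N}. psi (of_int k - u)) = (\<Sum>k\<in>{-int N..int N}. psi (- (of_int k - (- u))))"
    by (rule sum.reindex_bij_witness [of _ uminus uminus]) auto
  also have "\<dots> \<le> 2 * C + (\<Sum>j=1..N. D / real j ^ p) + (\<Sum>j=1..<N. D / real j ^ p)"
  proof (rule sum_shifted_integers_le_of_nonneg_shift [OF assms(1,2)])
    show "psi (- x) \<le> C" if "\<bar>x\<bar> \<le> real N + 1/2" for x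
      using near [of "- x"] that by simp
    show "psi (- x) \<le> D / \<bar>x\<bar> ^ p" if "0 < \<bar>x\<bar>" "\<bar>x\<bar> \<le> real N + 1/2" for x
      using far [of "- x"] that by simp
  qed (use False assms(3) in auto)
  finally show ?thesis .
qed

lemma sum_circle_grid_norm_kernel_le:
  fixes K :: "complex \<Rightarrow> complex" and p :: nat
  assumes "norm a = 1"
    and bounded: "\<And>z. norm z = 1 \<Longrightarrow> norm (K z) \<le> C"
    and decay: "\<And>z. norm z = 1 \<Longrightarrow> norm (z - 1) ^ p * norm (K z) \<le> B"
  shows "(\<Sum>w\<in>circle_grid N. norm (K (w / a)))
           \<le> 2 * C + 2 * B * (real (2 * N + 1) / 4) ^ p * (\<Sum>j=1..N. 1 / real j ^ p)"
proof -
  define M where "M = real (2 * N + 1)"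
  define D where "D = B * (M / 4) ^ p"
  have "0 \<le> C"
    using bounded [OF norm_one] norm_ge_zero [of "K 1"] by linarith
  have "0 \<le> norm (1 - 1 :: complex) ^ p * norm (K 1)"
    by simp
  then have "0 \<le> B"
    using decay [OF norm_one] by linarith
  then have "0 \<le> D"
    unfolding D_def M_def by simp
  obtain u where "\<bar>u\<bar> \<le> 1/2"
    and rotate: "(\<Sum>w\<in>circle_grid N. norm (K (w / a)))
                   = (\<Sum>k\<in>{-int N..int N}. norm (K (grid_exp N (of_int k - u))))"
    using sum_circle_grid_rotated [OF assms(1)] .
  have "(\<Sum>k\<in>{-int N..int N}. norm (K (grid_exp N (of_int k - u))))
          \<le> 2 * C + (\<Sum>j=1..N. D / real j ^ p) + (\<Sum>j=1..<N. D / real j ^ p)"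
  proof (rule sum_shifted_integers_le [OF \<open>0 \<le> C\<close> \<open>0 \<le> D\<close> \<open>\<bar>u\<bar> \<le> 1/2\<close>])
    show "norm (K (grid_exp N x)) \<le> C" for x
      by (rule bounded) simp
    show "norm (K (grid_exp N x)) \<le> D / \<bar>x\<bar> ^ p" if "0 < \<bar>x\<bar>" "\<bar>x\<bar> \<le> real N + 1/2" for x
    proof -
      have "(4 * \<bar>x\<bar> / M) ^ p * norm (K (grid_exp N x)) \<le> norm (grid_exp N x - 1) ^ p * norm (K (grid_exp N x))"
        unfolding M_def using that by (intro mult_right_mono power_mono norm_grid_exp_minus_1_ge) auto
      also have "\<dots> \<le> B"
        by (rule decay) simp
      finally have "norm (K (grid_exp N x)) \<le> B / (4 * \<bar>x\<bar> / M) ^ p"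
        using that unfolding M_def by (simp add: pos_le_divide_eq mult.commute)
      also have "\<dots> = D / \<bar>x\<bar> ^ p"
        unfolding D_def using that by (simp add: power_divide power_mult_distrib field_simps)
      finally show ?thesis .
    qed
  qed
  also have "(\<Sum>j=1..<N. D / real j ^ p) \<le> (\<Sum>j=1..N. D / real j ^ p)"
    using \<open>0 \<le> D\<close> by (intro sum_mono2) auto
  also have "(\<Sum>j=1..N. D / real j ^ p) = D * (\<Sum>j=1..N. 1 / real j ^ p)"
    by (simp add: sum_distrib_left)
  finally show ?thesis
    unfolding rotate D_def M_def by (simp add: mult_ac)
qed

lemma sum_inverse_squares_le: "(\<Sum>j=1..N. 1 / real j ^ 2) \<le> pi^2 / 6"
proof -
  have "(\<Sum>j=1..N. 1 / real j ^ 2) = (\<Sum>i<N. 1 / (real i + 1) ^ 2)"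
    by (rule sum.reindex_bij_witness [of _ Suc "\<lambda>j. j - 1"]) auto
  also have "\<dots> \<le> (\<Sum>i. 1 / (real i + 1) ^ 2)"
    using inverse_squares_sums by (intro sum_le_suminf) (auto simp: sums_iff add.commute)
  also have "\<dots> = pi^2 / 6"
    using inverse_squares_sums by (simp add: sums_iff add.commute)
  finally show ?thesis .
qed

lemma circle_grid_mean_Dir_le:
  assumes "norm a = 1"
  shows "(1 / real (2*N+1)) * (\<Sum>w\<in>circle_grid N. norm (Dir n (w / a)))
           \<le> real (4*n+2) / real (2*N+1) + harm N"
proof -
  have "(\<Sum>w\<in>circle_grid N. norm (Dir n (w / a)))
          \<le> 2 * (2 * real n + 1) + 2 * 2 * (real (2*N+1) / 4) ^ 1 * (\<Sum>j=1..N. 1 / real j ^ 1)"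
    by (rule sum_circle_grid_norm_kernel_le [OF assms, where K = "Dir n"])
      (simp_all add: norm_Dir_le norm_Dir_times_z_minus_1_le)
  also have "\<dots> = real (4*n+2) + real (2*N+1) * harm N"
    by (simp add: harm_def inverse_eq_divide)
  finally show ?thesis
    by (simp add: divide_simps mult.commute)
qed

lemma circle_grid_mean_Fej_le:
  assumes "norm a = 1"
  shows "(1 / real (2*N+1)) * (\<Sum>w\<in>circle_grid N. norm (Fej n (w / a)))
           \<le> real (2*n+2) / real (2*N+1) + (real (2*N+1) / real (2*n+2)) * (pi^2 / 6)"
proof -
  have "(\<Sum>w\<in>circle_grid N. norm (Fej n (w / a)))
          \<le> 2 * (real n + 1) + 2 * (4 / (real n + 1)) * (real (2*N+1) / 4) ^ 2 * (\<Sum>j=1..N. 1 / real j ^ 2)"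
    by (rule sum_circle_grid_norm_kernel_le [OF assms, where K = "Fej n"])
      (simp_all add: norm_Fej_le norm_Fej_times_square_z_minus_1_le)
  also have "\<dots> \<le> 2 * (real n + 1) + 2 * (4 / (real n + 1)) * (real (2*N+1) / 4) ^ 2 * (pi^2 / 6)"
    by (intro add_left_mono mult_left_mono sum_inverse_squares_le) simp
  also have "\<dots> = real (2*n+2) + real (2*N+1)^2 / real (2*n+2) * (pi^2 / 6)"
    by (simp add: power_divide divide_simps) algebra
  finally show ?thesis
    by (simp add: power2_eq_square divide_simps mult_ac)
qed

lemma norm_eq_1_if_in_circle_grid: "w \<in> circle_grid N \<Longrightarrow> norm w = 1"
  unfolding circle_grid_eq_image_grid_exp by auto

theorem lemma5:
  fixes n N :: nat and a :: complex
  assumes "a \<in> circle"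
  shows "((1 / real (2*N+1)) * (\<Sum>w\<in>circle_grid N. norm (Dir n (w / a)))
           \<le> real (4*n+2) / real (2*N+1) + harm N) \<and>
         ((1 / real (2*N+1)) * (\<Sum>w\<in>circle_grid N. norm (Fej_plus n (w / a)))
           = (1 / real (2*N+1)) * (\<Sum>w\<in>circle_grid N. norm (Fej n (w / a)))) \<and>
         ((1 / real (2*N+1)) * (\<Sum>w\<in>circle_grid N. norm (Fej n (w / a)))
           \<le> real (2*n+2) / real (2*N+1) + (real (2*N+1) / real (2*n+2)) * (pi^2 / 6))"
proof -
  have a: "norm a = 1"
    using assms unfolding circle_def by simp
  have "norm (Fej_plus n (w / a)) = norm (Fej n (w / a))" if "w \<in> circle_grid N" for w
    using a norm_eq_1_if_in_circle_grid [OF that] by (simp add: Fej_plus_def norm_mult norm_power norm_divide)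
  then show ?thesis
    using circle_grid_mean_Dir_le [OF a] circle_grid_mean_Fej_le [OF a] by simp
qed

end
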